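(* For all integers $1\le k\le n$, $\hat E_{k,n}(q)=\hat E_{n+1-k,n}(q)$.
   Context: Place $1,\dots,n$ clockwise on a circle. Distinct $p_1,\dots,p_m$ are in clockwise cyclic order if $(p_2-p_1)\bmod n<\dots<(p_m-p_1)\bmod n$ (residues in $\{0,\dots,n-1\}$). For $\pi\in S_n$ (fixed points regarded as "counterclockwise loops"), an ordered pair $(i,j)$, $i\ne j$, is aligned if $\pi(j)\ne j$, the entries of $(i,\pi(i),\pi(j),j)$ are pairwise distinct except that possibly $i=\pi(i)$, and the distinct entries in this order are in clockwise cyclic order. An alignment is an unordered pair $\{i,j\}$ with $(i,j)$ or $(j,i)$ aligned; $\mathrm{al}(\pi)$ is their number. A weak excedence of $\pi$ is an $i$ with $\pi(i)\ge i$. $E_{k,n}(q)=\sum q^{k(n-k)-\mathrm{al}(\pi)}$ over $\pi\in S_n$ with exactly $k$ weak excedences, and $\hat E_{k,n}(q)=q^{k-n}E_{k,n}(q)$. *)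

theory Defs
  imports "HOL-Combinatorics.Permutations" "HOL-Computational_Algebra.Formal_Laurent_Series"
begin

definition cyclic_order :: "nat \<Rightarrow> nat list \<Rightarrow> bool" where
  "cyclic_order n ps \<longleftrightarrow> distinct ps \<and>
     sorted_wrt (<) (map (\<lambda>p. (int p - int (hd ps)) mod int n) (tl ps))"

definition aligned :: "nat \<Rightarrow> (nat \<Rightarrow> nat) \<Rightarrow> nat \<Rightarrow> nat \<Rightarrow> bool" where
  "aligned n \<pi> i j \<longleftrightarrow> i \<noteq> j \<and> \<pi> j \<noteq> j \<and>
     (let ps = (if \<pi> i = i then [i, \<pi> j, j] else [i, \<pi> i, \<pi> j, j])
      in distinct ps \<and> cyclic_order n ps)"

definition al :: "nat \<Rightarrow> (nat \<Rightarrow> nat) \<Rightarrow> nat" where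
  "al n \<pi> = card {e. \<exists>i\<in>{1..n}. \<exists>j\<in>{1..n}. e = {i, j} \<and>
                        (aligned n \<pi> i j \<or> aligned n \<pi> j i)}"

definition wex :: "nat \<Rightarrow> (nat \<Rightarrow> nat) \<Rightarrow> nat" where
  "wex n \<pi> = card {i \<in> {1..n}. \<pi> i \<ge> i}"

definition E_poly :: "nat \<Rightarrow> nat \<Rightarrow> int fls" where
  "E_poly k n = (\<Sum>\<pi> \<in> {\<pi>. \<pi> permutes {1..n} \<and> wex n \<pi> = k}.
       fls_X_intpow (int (k * (n - k)) - int (al n \<pi>)))"

definition E_hat :: "nat \<Rightarrow> nat \<Rightarrow> int fls" where
  "E_hat k n = fls_X_intpow (int k - int n) * E_poly k n"

end

(*
  Let \<rho> be the rotation x \<mapsto> x - 1 of the circle {1..n} and send \<pi> to \<rho> \<circ> \<pi>\<inverse>, a bijection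
  of S_n. The point \<pi> y is a weak excedence of \<rho> \<circ> \<pi>\<inverse> iff \<pi> y \<le> \<rho> y, i.e. iff y = 1 or
  \<pi> y < y; so k weak excedences become n + 1 - k. The alignment {i, j} of \<pi> becomes the
  alignment {\<pi> i, \<pi> j} of \<rho> \<circ> \<pi>\<inverse>, so al is preserved. Since the exponent
  k - n + k(n - k) = k(n + 1 - k) - n is invariant under k \<mapsto> n + 1 - k, the two sums agree
  term by term.
*)
theory Submission
  imports Defs
begin

definition cyclic_triple :: "'a::linorder \<Rightarrow> 'a \<Rightarrow> 'a \<Rightarrow> bool" where
  "cyclic_triple x y z \<longleftrightarrow> (x < y \<and> y < z) \<or> (y < z \<and> z < x) \<or> (z < x \<and> x < y)"

lemma mod_diff_in_range:
  fixes x y n :: int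
  assumes "1 \<le> x" "x \<le> n" "1 \<le> y" "y \<le> n"
  shows "(x - y) mod n = (if y \<le> x then x - y else x - y + n)"
proof (cases "y \<le> x")
  case True
  then show ?thesis using assms by (simp add: mod_pos_pos_trivial)
next
  case False
  have "(x - y) mod n = (x - y + n) mod n" by simp
  also have "\<dots> = x - y + n" using assms False by (intro mod_pos_pos_trivial) auto
  finally show ?thesis using False by simp
qed

lemma cyclic_order_three_iff:
  assumes "a \<in> {1..n}" "b \<in> {1..n}" "c \<in> {1..n}" "distinct [a, b, c]"
  shows "cyclic_order n [a, b, c] \<longleftrightarrow> cyclic_triple (int a) (int b) (int c)"
  using assms unfolding cyclic_order_def cyclic_triple_def by (auto simp: mod_diff_in_range)

lemma cyclic_order_four_iff:
  assumes "a \<in> {1..n}" "b \<in> {1..n}" "c \<in> {1..n}" "d \<in> {1..n}" "distinct [a, b, c, d]"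
  shows "cyclic_order n [a, b, c, d] \<longleftrightarrow>
    cyclic_triple (int a) (int b) (int c) \<and> cyclic_triple (int a) (int c) (int d)"
  using assms unfolding cyclic_order_def cyclic_triple_def by (auto simp: mod_diff_in_range)

definition arcs_aligned :: "'a::linorder \<Rightarrow> 'a \<Rightarrow> 'a \<Rightarrow> 'a \<Rightarrow> bool" where
  "arcs_aligned i i' j j' \<longleftrightarrow> i \<noteq> j \<and> j' \<noteq> j \<and>
     (if i' = i then distinct [i, j', j] \<and> cyclic_triple i j' j
      else distinct [i, i', j', j] \<and> cyclic_triple i i' j' \<and> cyclic_triple i j' j)"

lemma aligned_iff_arcs_aligned:
  assumes "i \<in> {1..n}" "j \<in> {1..n}" "\<pi> i \<in> {1..n}" "\<pi> j \<in> {1..n}"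
  shows "aligned n \<pi> i j \<longleftrightarrow> arcs_aligned (int i) (int (\<pi> i)) (int j) (int (\<pi> j))"
  using assms unfolding aligned_def arcs_aligned_def Let_def
  by (auto simp: cyclic_order_three_iff cyclic_order_four_iff)

text \<open>The arcs i \<rightarrow> \<pi> i and j \<rightarrow> \<pi> j of \<pi> become the arcs \<pi> j \<rightarrow> \<rho> j and
  \<pi> i \<rightarrow> \<rho> i of \<rho> \<circ> \<pi>\<inverse>. Moving the two heads one step back does not change the
  cyclic order of the four endpoints except by creating or removing a coincidence;
  what remains is a finite case analysis of the possible coincidences.\<close>
lemma arcs_aligned_reverse_pred:
  fixes a b c d n a' c' :: int
  assumes "1 \<le> a" "a \<le> n" "1 \<le> b" "b \<le> n" "1 \<le> c" "c \<le> n" "1 \<le> d" "d \<le> n"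
    "a = c \<longleftrightarrow> b = d"
    "a' = (if a = 1 then n else a - 1)" "c' = (if c = 1 then n else c - 1)"
  shows "arcs_aligned d c' b a' \<longleftrightarrow> arcs_aligned a b c d"
  using assms unfolding arcs_aligned_def cyclic_triple_def
  by (smt (z3) distinct.simps list.set insert_iff empty_iff)

definition circ_pred :: "nat \<Rightarrow> nat \<Rightarrow> nat" where
  "circ_pred n x = (if x = 1 then n else if x \<in> {2..n} then x - 1 else x)"

lemma circ_pred_in_range: "x \<in> {1..n} \<Longrightarrow> circ_pred n x \<in> {1..n}"
  unfolding circ_pred_def by auto

lemma int_circ_pred: "x \<in> {1..n} \<Longrightarrow> int (circ_pred n x) = (if x = 1 then int n else int x - 1)"
  unfolding circ_pred_def by auto

lemma circ_pred_permutes: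
  assumes "1 \<le> n"
  shows "circ_pred n permutes {1..n}"
proof (rule bij_imp_permutes)
  have "inj_on (circ_pred n) {1..n}"
    using assms unfolding circ_pred_def by (auto simp: inj_on_def)
  moreover have "circ_pred n ` {1..n} \<subseteq> {1..n}"
    using circ_pred_in_range by blast
  ultimately show "bij_betw (circ_pred n) {1..n} {1..n}"
    by (simp add: endo_inj_surj bij_betw_def)
  show "\<And>x. x \<notin> {1..n} \<Longrightarrow> circ_pred n x = x"
    using assms unfolding circ_pred_def by auto
qed

definition circ_dual :: "nat \<Rightarrow> (nat \<Rightarrow> nat) \<Rightarrow> nat \<Rightarrow> nat" where
  "circ_dual n \<pi> = circ_pred n \<circ> inv \<pi>"

lemma circ_dual_permutes:
  "1 \<le> n \<Longrightarrow> \<pi> permutes {1..n} \<Longrightarrow> circ_dual n \<pi> permutes {1..n}"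
  unfolding circ_dual_def by (intro permutes_compose permutes_inv circ_pred_permutes)

lemma circ_dual_apply: "\<pi> permutes S \<Longrightarrow> circ_dual n \<pi> (\<pi> x) = circ_pred n x"
  unfolding circ_dual_def by (simp add: permutes_inverses)

lemma circ_dual_inverse:
  assumes "1 \<le> n" "\<pi> permutes {1..n}"
  shows "inv (circ_dual n \<pi>) \<circ> circ_pred n = \<pi>"
proof
  fix x
  show "(inv (circ_dual n \<pi>) \<circ> circ_pred n) x = \<pi> x"
    using permutes_inv_eq[OF circ_dual_permutes[OF assms]] circ_dual_apply[OF assms(2)] by simp
qed

lemma circ_dual_of_inverse:
  assumes "1 \<le> n" "\<sigma> permutes {1..n}"
  shows "circ_dual n (inv \<sigma> \<circ> circ_pred n) = \<sigma>"
proof -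
  have pred: "circ_pred n permutes {1..n}" using assms(1) by (rule circ_pred_permutes)
  have "inv (inv \<sigma> \<circ> circ_pred n) = inv (circ_pred n) \<circ> \<sigma>"
    using o_inv_distrib[OF permutes_bij[OF permutes_inv[OF assms(2)]] permutes_bij[OF pred]]
      permutes_inv_inv[OF assms(2)] by simp
  then show ?thesis
    unfolding circ_dual_def by (simp add: o_assoc permutes_inv_o[OF pred])
qed

lemma aligned_circ_dual:
  assumes \<pi>: "\<pi> permutes {1..n}" and i: "i \<in> {1..n}" and j: "j \<in> {1..n}"
  shows "aligned n (circ_dual n \<pi>) (\<pi> j) (\<pi> i) \<longleftrightarrow> aligned n \<pi> i j"
proof -
  have \<pi>_in: "\<pi> x \<in> {1..n}" if "x \<in> {1..n}" for x
    using permutes_in_image[OF \<pi>] that by simp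
  have "aligned n (circ_dual n \<pi>) (\<pi> j) (\<pi> i) \<longleftrightarrow>
      arcs_aligned (int (\<pi> j)) (int (circ_pred n j)) (int (\<pi> i)) (int (circ_pred n i))"
    using aligned_iff_arcs_aligned[of "\<pi> j" n "\<pi> i" "circ_dual n \<pi>"] \<pi>_in[OF i] \<pi>_in[OF j]
      circ_pred_in_range[OF i] circ_pred_in_range[OF j]
    by (simp add: circ_dual_apply[OF \<pi>])
  also have "\<dots> \<longleftrightarrow> arcs_aligned (int i) (int (\<pi> i)) (int j) (int (\<pi> j))"
    using i j \<pi>_in[OF i] \<pi>_in[OF j] permutes_inj[OF \<pi>]
    by (intro arcs_aligned_reverse_pred) (auto simp: int_circ_pred inj_eq)
  also have "\<dots> \<longleftrightarrow> aligned n \<pi> i j"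
    using aligned_iff_arcs_aligned[of i n j \<pi>] i j \<pi>_in by simp
  finally show ?thesis .
qed

lemma card_sym_pairs_bij_betw:
  assumes f: "bij_betw f S T"
    and R: "\<And>i j. i \<in> S \<Longrightarrow> j \<in> S \<Longrightarrow> R' (f j) (f i) \<longleftrightarrow> R i j"
  shows "card {e. \<exists>i\<in>T. \<exists>j\<in>T. e = {i, j} \<and> (R' i j \<or> R' j i)} =
         card {e. \<exists>i\<in>S. \<exists>j\<in>S. e = {i, j} \<and> (R i j \<or> R j i)}"
proof -
  let ?P = "{e. \<exists>i\<in>S. \<exists>j\<in>S. e = {i, j} \<and> (R i j \<or> R j i)}"
  have "{e. \<exists>i\<in>T. \<exists>j\<in>T. e = {i, j} \<and> (R' i j \<or> R' j i)} = (`) f ` ?P"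
  proof (intro set_eqI iffI)
    fix e assume "e \<in> {e. \<exists>i\<in>T. \<exists>j\<in>T. e = {i, j} \<and> (R' i j \<or> R' j i)}"
    then obtain i j where "i \<in> S" "j \<in> S" "e = {f i, f j}" "R' (f i) (f j) \<or> R' (f j) (f i)"
      using bij_betw_imp_surj_on[OF f] by blast
    then show "e \<in> (`) f ` ?P"
      using R by (intro image_eqI[of _ _ "{i, j}"]) auto
  next
    fix e assume "e \<in> (`) f ` ?P"
    then obtain i j where "i \<in> S" "j \<in> S" "e = {f i, f j}" "R i j \<or> R j i"
      by auto
    then show "e \<in> {e. \<exists>i\<in>T. \<exists>j\<in>T. e = {i, j} \<and> (R' i j \<or> R' j i)}"
      using R bij_betw_apply[OF f] by blast
  qed
  moreover have "inj_on ((`) f) ?P"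
    by (rule inj_on_image, rule inj_on_subset[OF bij_betw_imp_inj_on[OF f]]) auto
  ultimately show ?thesis
    by (simp add: card_image)
qed

lemma al_circ_dual:
  assumes "\<pi> permutes {1..n}"
  shows "al n (circ_dual n \<pi>) = al n \<pi>"
  unfolding al_def using assms
  by (intro card_sym_pairs_bij_betw[of \<pi>]) (auto simp: permutes_imp_bij aligned_circ_dual)

lemma wex_le: "wex n \<pi> \<le> n"
proof -
  have "card {i \<in> {1..n}. i \<le> \<pi> i} \<le> card {1..n}" by (rule card_mono) auto
  then show ?thesis unfolding wex_def by simp
qed

lemma wex_circ_dual:
  assumes n: "1 \<le> n" and \<pi>: "\<pi> permutes {1..n}"
  shows "wex n (circ_dual n \<pi>) = n + 1 - wex n \<pi>"
proof -
  have \<pi>_in: "\<pi> x \<in> {1..n}" if "x \<in> {1..n}" for x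
    using permutes_in_image[OF \<pi>] that by simp
  have "{x \<in> {1..n}. x \<le> circ_dual n \<pi> x} = \<pi> ` {y \<in> {1..n}. \<pi> y \<le> circ_dual n \<pi> (\<pi> y)}"
    by (subst (1) permutes_image[OF \<pi>, symmetric]) (rule Compr_image_eq)
  also have "\<dots> = \<pi> ` {y \<in> {1..n}. \<pi> y \<le> circ_pred n y}"
    by (simp add: circ_dual_apply[OF \<pi>])
  finally have "wex n (circ_dual n \<pi>) = card {y \<in> {1..n}. \<pi> y \<le> circ_pred n y}"
    unfolding wex_def by (simp add: card_image permutes_inj_on[OF \<pi>])
  also have "{y \<in> {1..n}. \<pi> y \<le> circ_pred n y} = insert 1 {y \<in> {1..n}. \<pi> y < y}"
  proof (intro set_eqI iffI)
    fix y assume "y \<in> {y \<in> {1..n}. \<pi> y \<le> circ_pred n y}"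
    then show "y \<in> insert 1 {y \<in> {1..n}. \<pi> y < y}"
      unfolding circ_pred_def by (auto split: if_splits)
  next
    fix y assume "y \<in> insert 1 {y \<in> {1..n}. \<pi> y < y}"
    then show "y \<in> {y \<in> {1..n}. \<pi> y \<le> circ_pred n y}"
      using n \<pi>_in[of y] unfolding circ_pred_def by auto
  qed
  also have "card (insert 1 {y \<in> {1..n}. \<pi> y < y}) = 1 + card {y \<in> {1..n}. \<pi> y < y}"
    using n \<pi>_in[of 1] by (subst card_insert_disjoint) auto
  also have "{y \<in> {1..n}. \<pi> y < y} = {1..n} - {y \<in> {1..n}. y \<le> \<pi> y}"
    by auto
  also have "1 + card ({1..n} - {y \<in> {1..n}. y \<le> \<pi> y}) = 1 + (n - wex n \<pi>)"
    unfolding wex_def by (subst card_Diff_subset) auto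
  also have "\<dots> = n + 1 - wex n \<pi>"
    using wex_le[of n \<pi>] by simp
  finally show ?thesis .
qed

lemma bij_betw_circ_dual:
  assumes "1 \<le> n" "k \<le> n"
  shows "bij_betw (circ_dual n) {\<pi>. \<pi> permutes {1..n} \<and> wex n \<pi> = k}
           {\<sigma>. \<sigma> permutes {1..n} \<and> wex n \<sigma> = n + 1 - k}"
proof (rule bij_betw_byWitness[where f' = "\<lambda>\<sigma>. inv \<sigma> \<circ> circ_pred n"])
  show "circ_dual n ` {\<pi>. \<pi> permutes {1..n} \<and> wex n \<pi> = k} \<subseteq>
      {\<sigma>. \<sigma> permutes {1..n} \<and> wex n \<sigma> = n + 1 - k}"
  proof clarify
    fix \<pi> assume "\<pi> permutes {1..n}"
    then show "circ_dual n \<pi> permutes {1..n} \<and> wex n (circ_dual n \<pi>) = n + 1 - wex n \<pi>"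
      using circ_dual_permutes[OF assms(1)] wex_circ_dual[OF assms(1)] by blast
  qed
  show "(\<lambda>\<sigma>. inv \<sigma> \<circ> circ_pred n) ` {\<sigma>. \<sigma> permutes {1..n} \<and> wex n \<sigma> = n + 1 - k} \<subseteq>
      {\<pi>. \<pi> permutes {1..n} \<and> wex n \<pi> = k}"
  proof clarify
    fix \<sigma> assume \<sigma>: "\<sigma> permutes {1..n}" and "wex n \<sigma> = n + 1 - k"
    let ?\<tau> = "inv \<sigma> \<circ> circ_pred n"
    have \<tau>: "?\<tau> permutes {1..n}"
      using \<sigma> assms(1) by (intro permutes_compose permutes_inv circ_pred_permutes)
    have "n + 1 - wex n ?\<tau> = n + 1 - k"
      using wex_circ_dual[OF assms(1) \<tau>] circ_dual_of_inverse[OF assms(1) \<sigma>] \<open>wex n \<sigma> = _\<close>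
      by simp
    then show "?\<tau> permutes {1..n} \<and> wex n ?\<tau> = k"
      using \<tau> wex_le[of n ?\<tau>] assms(2) by simp
  qed
qed (use circ_dual_inverse[OF assms(1)] circ_dual_of_inverse[OF assms(1)] in blast)+

lemma E_hat_eq_sum:
  assumes "k \<le> n"
  shows "E_hat k n = (\<Sum>\<pi> | \<pi> permutes {1..n} \<and> wex n \<pi> = k.
           fls_X_intpow (int (k * (n + 1 - k)) - int n - int (al n \<pi>)))"
proof -
  obtain d where "n = k + d"
    using assms le_Suc_ex by blast
  then have exponent: "int k - int n + (int (k * (n - k)) - int a) =
        int (k * (n + 1 - k)) - int n - int a" for a
    by (simp add: algebra_simps)
  show ?thesis
    unfolding E_hat_def E_poly_def sum_distrib_left fls_X_intpow_times_fls_X_intpow exponent ..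
qed

theorem mainTheorem10:
  fixes k n :: nat
  assumes "1 \<le> k" and "k \<le> n"
  shows "E_hat k n = E_hat (n + 1 - k) n"
proof -
  define k' where "k' = n + 1 - k"
  have n: "1 \<le> n" and "k' \<le> n" and "k' * (n + 1 - k') = k * (n + 1 - k)"
    using assms by (auto simp: k'_def)
  let ?X = "\<lambda>\<pi>. fls_X_intpow (int (k * (n + 1 - k)) - int n - int (al n \<pi>)) :: int fls"
  have "E_hat k n = sum ?X {\<pi>. \<pi> permutes {1..n} \<and> wex n \<pi> = k}"
    using E_hat_eq_sum[OF assms(2)] .
  also have "\<dots> = sum (?X \<circ> circ_dual n) {\<pi>. \<pi> permutes {1..n} \<and> wex n \<pi> = k}"
    by (intro sum.cong) (auto simp: al_circ_dual)
  also have "\<dots> = sum ?X {\<sigma>. \<sigma> permutes {1..n} \<and> wex n \<sigma> = k'}"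
    unfolding k'_def using sum.reindex_bij_betw[OF bij_betw_circ_dual[OF n assms(2)]]
    by (simp add: comp_def)
  also have "\<dots> = E_hat k' n"
    using E_hat_eq_sum[OF \<open>k' \<le> n\<close>] by (simp only: \<open>k' * (n + 1 - k') = _\<close>)
  finally show ?thesis unfolding k'_def .
qed

end
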